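(* The flow-cut gap for Minimum Cooperative Cut can be as large as $n-1$: for every $n\ge 2$ there is a directed graph on $n$ nodes with terminals $s,t$ and a normalized, monotone nondecreasing submodular $f$ on its edges such that $f(C^* )/\nu^*=n-1$, where $C^*$ is an $f$-minimal $(s,t)$-cut and $\nu^*$ is the optimal value of the Maximum Cooperative Flow problem.
   Context: An $(s,t)$-cut is a set of edges whose removal disconnects all $s$-$t$ paths; $C^*$ minimizes $f$ over $(s,t)$-cuts. The Maximum Cooperative Flow problem is: maximize $\nu$ over $\nu\in\mathbb{R}$, $\varphi\in\mathbb{R}^{\mathcal{E}}$ subject to $\varphi\ge0$; $\sum_{e\in A}\varphi(e)\le f(A)$ for all $A\subseteq\mathcal{E}$; and $\sum_{e\in\delta^+(u)}\varphi(e)-\sum_{e\in\delta^-(u)}\varphi(e)=d(u)\nu$ for all nodes $u$, where $d(s)=1$, $d(t)=-1$, $d(u)=0$ otherwise. The flow-cut gap is the ratio $f(C^* )/\nu^*$. *)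

theory Defs
  imports Complex_Main
begin

definition digraph :: "'v set \<Rightarrow> ('v \<times> 'v) set \<Rightarrow> bool" where
  "digraph V E \<longleftrightarrow> finite V \<and> E \<subseteq> V \<times> V \<and> (\<forall>(u,v)\<in>E. u \<noteq> v)"

definition normalized :: "('e set \<Rightarrow> real) \<Rightarrow> bool" where
  "normalized f \<longleftrightarrow> f {} = 0"

definition monotone_nondecr :: "'e set \<Rightarrow> ('e set \<Rightarrow> real) \<Rightarrow> bool" where
  "monotone_nondecr E f \<longleftrightarrow> (\<forall>A B. A \<subseteq> B \<and> B \<subseteq> E \<longrightarrow> f A \<le> f B)"

definition submodular :: "'e set \<Rightarrow> ('e set \<Rightarrow> real) \<Rightarrow> bool" where
  "submodular E f \<longleftrightarrow>
     (\<forall>A B. A \<subseteq> E \<and> B \<subseteq> E \<longrightarrow> f (A \<union> B) + f (A \<inter> B) \<le> f A + f B)"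

definition st_cut :: "('v \<times> 'v) set \<Rightarrow> 'v \<Rightarrow> 'v \<Rightarrow> ('v \<times> 'v) set \<Rightarrow> bool" where
  "st_cut E s t C \<longleftrightarrow> C \<subseteq> E \<and> (s, t) \<notin> (E - C)\<^sup>*"

definition min_coop_cut :: "('v \<times> 'v) set \<Rightarrow> 'v \<Rightarrow> 'v \<Rightarrow> (('v \<times> 'v) set \<Rightarrow> real)
    \<Rightarrow> ('v \<times> 'v) set \<Rightarrow> bool" where
  "min_coop_cut E s t f C \<longleftrightarrow> st_cut E s t C \<and> (\<forall>C'. st_cut E s t C' \<longrightarrow> f C \<le> f C')"

definition dem :: "'v \<Rightarrow> 'v \<Rightarrow> 'v \<Rightarrow> real" where
  "dem s t u = (if u = s then 1 else if u = t then -1 else 0)"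

definition coop_flow :: "'v set \<Rightarrow> ('v \<times> 'v) set \<Rightarrow> 'v \<Rightarrow> 'v \<Rightarrow> (('v \<times> 'v) set \<Rightarrow> real)
    \<Rightarrow> real \<Rightarrow> ('v \<times> 'v \<Rightarrow> real) \<Rightarrow> bool" where
  "coop_flow V E s t f \<nu> \<phi> \<longleftrightarrow>
     (\<forall>e\<in>E. 0 \<le> \<phi> e) \<and>
     (\<forall>A. A \<subseteq> E \<longrightarrow> (\<Sum>e\<in>A. \<phi> e) \<le> f A) \<and>
     (\<forall>u\<in>V. (\<Sum>e\<in>{e\<in>E. fst e = u}. \<phi> e) - (\<Sum>e\<in>{e\<in>E. snd e = u}. \<phi> e) = dem s t u * \<nu>)"

definition max_coop_flow_value :: "'v set \<Rightarrow> ('v \<times> 'v) set \<Rightarrow> 'v \<Rightarrow> 'v \<Rightarrow> (('v \<times> 'v) set \<Rightarrow> real)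
    \<Rightarrow> real \<Rightarrow> bool" where
  "max_coop_flow_value V E s t f \<nu> \<longleftrightarrow>
     (\<exists>\<phi>. coop_flow V E s t f \<nu> \<phi>) \<and> (\<forall>\<nu>' \<phi>'. coop_flow V E s t f \<nu>' \<phi>' \<longrightarrow> \<nu>' \<le> \<nu>)"

end

theory Submission
  imports Defs
begin

text \<open>The extremal instance is the directed path \<open>0 \<rightarrow> 1 \<rightarrow> \<dots> \<rightarrow> n-1\<close> with
  \<open>f A = 1\<close> for every nonempty \<open>A\<close>. Every \<open>(0, n-1)\<close>-cut is nonempty, so the minimum
  cut has value 1. Flow conservation forces every edge of the path to carry exactly \<open>\<nu>\<close>,
  so the constraint on the whole edge set reads \<open>(n-1) \<nu> \<le> 1\<close>: cooperation lets
  \<open>f\<close> charge all \<open>n-1\<close> edges only once, and \<open>\<nu>* = 1/(n-1)\<close>.\<close>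

definition nonempty_indicator :: "'a set \<Rightarrow> real" where
  "nonempty_indicator A = (if A = {} then 0 else 1)"

lemma normalized_nonempty_indicator: "normalized nonempty_indicator"
  by (simp add: normalized_def nonempty_indicator_def)

lemma monotone_nondecr_nonempty_indicator: "monotone_nondecr E nonempty_indicator"
  by (auto simp: monotone_nondecr_def nonempty_indicator_def)

lemma submodular_nonempty_indicator: "submodular E nonempty_indicator"
  by (auto simp: submodular_def nonempty_indicator_def)

lemma min_coop_cut_nonempty_indicator:
  assumes "st_cut E s t C" "C \<noteq> {}" "(s, t) \<in> E\<^sup>*"
  shows "min_coop_cut E s t nonempty_indicator C"
proof -
  have "C' \<noteq> {}" if "st_cut E s t C'" for C'
    using that assms(3) by (auto simp: st_cut_def)
  then show ?thesis
    using assms(1,2) by (auto simp: min_coop_cut_def nonempty_indicator_def)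
qed

definition path_edges :: "nat \<Rightarrow> (nat \<times> nat) set" where
  "path_edges n = {(i, Suc i) | i. Suc i < n}"

lemma digraph_path_edges: "digraph {0..<n} (path_edges n)"
  by (auto simp: digraph_def path_edges_def)

lemma path_edges_eq_image: "path_edges n = (\<lambda>i. (i, Suc i)) ` {0..<n - 1}"
  by (auto simp: path_edges_def)

lemma finite_path_edges: "finite (path_edges n)"
  by (simp add: path_edges_eq_image)

lemma card_path_edges: "card (path_edges n) = n - 1"
  by (simp add: path_edges_eq_image card_image inj_on_def)

lemma path_edges_out:
  "{e \<in> path_edges n. fst e = u} = (if Suc u < n then {(u, Suc u)} else {})"
  by (auto simp: path_edges_def)

lemma path_edges_in:
  "{e \<in> path_edges n. snd e = u} = (if 0 < u \<and> u < n then {(u - 1, u)} else {})"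
  by (cases u) (auto simp: path_edges_def)

lemma rtrancl_path_edges_from_0:
  assumes "k < n"
  shows "(0, k) \<in> (path_edges n)\<^sup>*"
  using assms
proof (induction k)
  case 0
  then show ?case by simp
next
  case (Suc k)
  then have "(0, k) \<in> (path_edges n)\<^sup>*" "(k, Suc k) \<in> path_edges n"
    by (auto simp: path_edges_def)
  then show ?case
    by (rule rtrancl_into_rtrancl)
qed

lemma rtrancl_from_sink:
  assumes "(x, y) \<in> R\<^sup>*" "\<forall>z. (x, z) \<notin> R"
  shows "y = x"
  using assms by (induction rule: rtrancl_induct) auto

lemma st_cut_path_first_edge:
  assumes "n \<ge> 2"
  shows "st_cut (path_edges n) 0 (n - 1) {(0, 1)}"
proof -
  have "\<forall>z. (0, z) \<notin> path_edges n - {(0, 1)}"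
    by (auto simp: path_edges_def)
  then have "(0, n - 1) \<notin> (path_edges n - {(0, 1)})\<^sup>*"
    using assms rtrancl_from_sink[of 0 "n - 1"] by auto
  moreover have "(0, 1) \<in> path_edges n"
    using assms by (auto simp: path_edges_def)
  ultimately show ?thesis
    by (simp add: st_cut_def)
qed

lemma coop_flow_path_constant:
  assumes "coop_flow {0..<n} (path_edges n) 0 (n - 1) f \<nu> \<phi>" "Suc i < n"
  shows "\<phi> (i, Suc i) = \<nu>"
proof -
  have conservation: "\<phi> (u, Suc u) - (if u = 0 then 0 else \<phi> (u - 1, u)) = dem 0 (n - 1) u * \<nu>"
    if "Suc u < n" for u
  proof -
    have "u \<in> {0..<n}"
      using that by simp
    with assms(1) have "(\<Sum>e\<in>{e \<in> path_edges n. fst e = u}. \<phi> e)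
        - (\<Sum>e\<in>{e \<in> path_edges n. snd e = u}. \<phi> e) = dem 0 (n - 1) u * \<nu>"
      unfolding coop_flow_def by blast
    then show ?thesis
      using that by (cases u) (simp_all add: path_edges_out path_edges_in)
  qed
  show ?thesis
    using assms(2)
  proof (induction i)
    case 0
    then show ?case using conservation[of 0] by (simp add: dem_def)
  next
    case (Suc i)
    then show ?case using conservation[of "Suc i"] by (auto simp: dem_def split: if_splits)
  qed
qed

lemma coop_flow_path_uniform:
  fixes \<nu> :: real
  assumes "n \<ge> 2" "0 \<le> \<nu>" "(real n - 1) * \<nu> \<le> 1"
  shows "coop_flow {0..<n} (path_edges n) 0 (n - 1) nonempty_indicator \<nu> (\<lambda>e. \<nu>)"
  unfolding coop_flow_def
proof (intro conjI ballI allI impI)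
  fix A assume "A \<subseteq> path_edges n"
  then have "card A \<le> n - 1"
    using card_mono[OF finite_path_edges] card_path_edges by metis
  then have "card A \<le> real n - 1"
    using assms(1) by linarith
  then have "card A * \<nu> \<le> 1"
    using assms(2,3) mult_right_mono order_trans by blast
  then show "(\<Sum>e\<in>A. \<nu>) \<le> nonempty_indicator A"
    by (simp add: nonempty_indicator_def)
next
  fix u assume "u \<in> {0..<n}"
  then show "(\<Sum>e\<in>{e \<in> path_edges n. fst e = u}. \<nu>) - (\<Sum>e\<in>{e \<in> path_edges n. snd e = u}. \<nu>)
      = dem 0 (n - 1) u * \<nu>"
    using assms(1) by (auto simp: path_edges_out path_edges_in dem_def)
qed (use assms(2) in auto)

lemma coop_flow_path_value_bound:
  assumes "n \<ge> 2" "coop_flow {0..<n} (path_edges n) 0 (n - 1) nonempty_indicator \<nu> \<phi>"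
  shows "(real n - 1) * \<nu> \<le> 1"
proof -
  have "(real n - 1) * \<nu> = (\<Sum>e\<in>path_edges n. \<nu>)"
    using assms(1) card_path_edges[of n] by (simp add: of_nat_diff)
  also have "\<dots> = (\<Sum>e\<in>path_edges n. \<phi> e)"
    using coop_flow_path_constant[OF assms(2)] by (intro sum.cong) (auto simp: path_edges_def)
  also have "\<dots> \<le> nonempty_indicator (path_edges n)"
    using assms(2) by (simp add: coop_flow_def)
  also have "\<dots> \<le> 1"
    by (simp add: nonempty_indicator_def)
  finally show ?thesis .
qed

lemma max_coop_flow_value_path:
  assumes "n \<ge> 2"
  shows "max_coop_flow_value {0..<n} (path_edges n) 0 (n - 1) nonempty_indicator (1 / (real n - 1))"
proof -
  have "real n - 1 > 0"
    using assms by simp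
  then have "coop_flow {0..<n} (path_edges n) 0 (n - 1) nonempty_indicator
      (1 / (real n - 1)) (\<lambda>e. 1 / (real n - 1))"
    by (intro coop_flow_path_uniform[OF assms]) simp_all
  moreover have "\<nu> \<le> 1 / (real n - 1)"
    if "coop_flow {0..<n} (path_edges n) 0 (n - 1) nonempty_indicator \<nu> \<phi>" for \<nu> \<phi>
    using coop_flow_path_value_bound[OF assms that] \<open>real n - 1 > 0\<close>
    by (simp add: field_simps)
  ultimately show ?thesis
    unfolding max_coop_flow_value_def by blast
qed

theorem corollary1:
  fixes n :: nat
  assumes "n \<ge> 2"
  shows "\<exists>(E :: (nat \<times> nat) set) s t (f :: (nat \<times> nat) set \<Rightarrow> real) Cstar \<nu>star.
           digraph {0..<n} E \<and> s \<in> {0..<n} \<and> t \<in> {0..<n} \<and> s \<noteq> t \<and>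
           normalized f \<and> monotone_nondecr E f \<and> submodular E f \<and>
           min_coop_cut E s t f Cstar \<and> max_coop_flow_value {0..<n} E s t f \<nu>star \<and>
           f Cstar / \<nu>star = real n - 1"
proof -
  have "min_coop_cut (path_edges n) 0 (n - 1) nonempty_indicator {(0, 1)}"
    using st_cut_path_first_edge[OF assms] rtrancl_path_edges_from_0[of "n - 1" n] assms
    by (intro min_coop_cut_nonempty_indicator) auto
  moreover have "nonempty_indicator {(0::nat, 1::nat)} / (1 / (real n - 1)) = real n - 1"
    by (simp add: nonempty_indicator_def)
  ultimately show ?thesis
    using assms digraph_path_edges normalized_nonempty_indicator
      monotone_nondecr_nonempty_indicator submodular_nonempty_indicator
      max_coop_flow_value_path[OF assms]
    by (intro exI[of _ "path_edges n"] exI[of _ 0] exI[of _ "n - 1"]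
        exI[of _ nonempty_indicator] exI[of _ "{(0, 1)}"] exI[of _ "1 / (real n - 1)"]) auto
qed

end
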